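(* Consider the $\mathrm{Top}\text{-}\ell$ version of fault-tolerant ordered $k$-median, fix an optimal solution with optimal value $\mathsf{OPT}$, and let $T_\ell=\vec{\xi}^\downarrow_\ell$ be the $\ell$-th largest individual connection distance in that optimal solution. Then the following linear program (Top-LP), in variables $x_{ij}$ ($i\in\mathcal{F},j\in\mathcal{C}$), $y_i$ ($i\in\mathcal{F}$), $R_\ell$, is feasible and its optimal value satisfies $R_\ell\le\mathsf{OPT}$: minimize $R_\ell\geq0$ subject to $\sum_{j\in\mathcal{C}}\sum_{i\in\mathcal{F}}x_{ij}\mathcal{L}_{1.001\cdot T_\ell}(i,j)\le R_\ell$; $\sum_{j\in S}\sum_{i\in\mathcal{F}}x_{ij}d(i,j)\le R_\ell$ for all $S\subseteq\mathcal{C}$ with $|S|=\ell$; $\sum_{i\in\mathcal{F}}x_{ij}=r_j$ for all $j\in\mathcal{C}$; $\sum_{i\in\mathcal{F}}y_i=k$; $0\le x_{ij}\le y_i\le1$ for all $i\in\mathcal{F},j\in\mathcal{C}$.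
   Context: Fault-tolerant ordered $k$-median: given finite facility set $\mathcal{F}$, finite client set $\mathcal{C}$ with $n=|\mathcal{C}|$, a metric $d$ on $\mathcal{F}\cup\mathcal{C}$, $k\in\mathbb{Z}_+$, requirements $r_j\in\mathbb{Z}_+$ for $j\in\mathcal{C}$, and a non-increasing non-negative $w\in\mathbb{R}^n$. A solution opens a set $F\subseteq\mathcal{F}$ of at most $k$ facilities; each client $j$ is connected to its $r_j$ nearest (distinct) open facilities, with service cost $d_{r_j}(j,F)=\min_{S'\subseteq F,|S'|=r_j}\sum_{i\in S'}d(i,j)$; the objective is $w^\top\vec{c}^\downarrow$ with $\vec{c}=(d_{r_j}(j,F):j\in\mathcal{C})$ sorted non-increasingly. In the $\mathrm{Top}\text{-}\ell$ version ($\ell\in[n]$), $w$ consists of $\ell$ ones followed by zeros, so the objective is the sum of the $\ell$ largest service costs. The individual connection cost vector $\vec{\xi}$ of a solution is the vector of distances $d(i,j)$ over all pairs where client $j$ is connected to facility $i$; $\vec{\xi}^\downarrow$ is it sorted non-increasingly. For $T\geq0$, $\mathcal{L}_T(i,j)=d(i,j)$ if $d(i,j)\geq T$ and $0$ otherwise. *)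

theory Defs
  imports Complex_Main "HOL-Library.Multiset"
begin

definition is_metric_on :: "'a set \<Rightarrow> ('a \<Rightarrow> 'a \<Rightarrow> real) \<Rightarrow> bool" where
  "is_metric_on X d \<longleftrightarrow>
     (\<forall>x\<in>X. \<forall>y\<in>X. d x y \<ge> 0 \<and> d x y = d y x \<and> (d x y = 0 \<longleftrightarrow> x = y)) \<and>
     (\<forall>x\<in>X. \<forall>y\<in>X. \<forall>z\<in>X. d x z \<le> d x y + d y z)"

definition serv_cost :: "('a \<Rightarrow> 'a \<Rightarrow> real) \<Rightarrow> nat \<Rightarrow> 'a \<Rightarrow> 'a set \<Rightarrow> real" where
  "serv_cost d r j F = Min ((\<lambda>S'. \<Sum>i\<in>S'. d i j) ` {S'. S' \<subseteq> F \<and> card S' = r})"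

definition sorted_desc :: "real multiset \<Rightarrow> real list" where
  "sorted_desc M = rev (sorted_list_of_multiset M)"

definition top_sum :: "nat \<Rightarrow> real multiset \<Rightarrow> real" where
  "top_sum l M = sum_list (take l (sorted_desc M))"

definition feasible_sol :: "'a set \<Rightarrow> 'a set \<Rightarrow> nat \<Rightarrow> ('a \<Rightarrow> nat) \<Rightarrow> 'a set \<Rightarrow> bool" where
  "feasible_sol Fac Cl k r F \<longleftrightarrow> F \<subseteq> Fac \<and> card F \<le> k \<and> (\<forall>j\<in>Cl. r j \<le> card F)"

definition topl_cost :: "('a \<Rightarrow> 'a \<Rightarrow> real) \<Rightarrow> 'a set \<Rightarrow> ('a \<Rightarrow> nat) \<Rightarrow> nat \<Rightarrow> 'a set \<Rightarrow> real" where
  "topl_cost d Cl r l F = top_sum l (image_mset (\<lambda>j. serv_cost d (r j) j F) (mset_set Cl))"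

definition conn_costs :: "('a \<Rightarrow> 'a \<Rightarrow> real) \<Rightarrow> 'a set \<Rightarrow> ('a \<Rightarrow> 'a set) \<Rightarrow> real multiset" where
  "conn_costs d Cl S = image_mset (\<lambda>(j, i). d i j) (mset_set (SIGMA j:Cl. S j))"

definition LT :: "real \<Rightarrow> real \<Rightarrow> real" where
  "LT T a = (if a \<ge> T then a else 0)"

end

theory Submission
  imports Defs
begin

(* The optimal solution is itself an integral point of Top-LP: x_ij = [i \<in> S j], y the indicator
   of F0 padded to k facilities, and R = OPT. Any l clients pay at most the l largest service
   costs, i.e. at most OPT. For the threshold constraint, L_{1.001 T}(i,j) vanishes unless
   d(i,j) > T, and as T is the l-th largest connection distance, fewer than l connections exceed
   it; they serve at most l - 1 clients, whose service costs again sum to at most OPT. *)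

lemma mset_sorted_desc [simp]: "mset (sorted_desc M) = M"
  by (simp add: sorted_desc_def)

lemma set_sorted_desc [simp]: "set (sorted_desc M) = set_mset M"
  by (simp add: sorted_desc_def)

lemma sorted_wrt_sorted_desc: "sorted_wrt (\<ge>) (sorted_desc M)"
  by (simp add: sorted_desc_def sorted_wrt_rev)

lemma sum_mset_le_sum_take_sorted:
  fixes xs :: "'a::ordered_comm_monoid_add list"
  assumes "sorted_wrt (\<ge>) xs" and "\<forall>v\<in>set xs. 0 \<le> v"
    and "N \<subseteq># mset xs" and "size N \<le> l"
  shows "sum_mset N \<le> sum_list (take l xs)"
  using assms
proof (induction xs arbitrary: N l)
  case Nil
  then show ?case by simp
next
  case (Cons x xs)
  show ?case
  proof (cases "N = {#}")
    case True
    have "0 \<le> sum_list (take l (x # xs))"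
      by (rule sum_list_nonneg) (use Cons.prems(2) in \<open>blast dest: in_set_takeD\<close>)
    then show ?thesis
      using True by simp
  next
    case False
    then obtain l' where l: "l = Suc l'"
      using Cons.prems(4) by (cases l) auto
    have N_minus_x: "N - {#x#} \<subseteq># mset xs"
      using Cons.prems(3) by (simp add: subset_eq_diff_conv)
    obtain y where y: "y \<in># N" "y \<le> x" "N - {#y#} \<subseteq># mset xs"
    proof (cases "x \<in># N")
      case True
      then show ?thesis
        using N_minus_x by (intro that[of x]) simp_all
    next
      case x_notin: False
      obtain y where "y \<in># N"
        using \<open>N \<noteq> {#}\<close> by blast
      moreover from x_notin N_minus_x have "N \<subseteq># mset xs"
        by (simp add: diff_single_trivial)
      ultimately show ?thesis
        using Cons.prems(1)
        by (intro that[of y])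
          (auto dest: mset_subset_eqD intro: subset_mset.order_trans[OF diff_subset_eq_self])
    qed
    have "sum_mset (N - {#y#}) \<le> sum_list (take l' xs)"
      using Cons y Cons.prems(4) l by (auto simp: size_Diff_singleton)
    then have "y + sum_mset (N - {#y#}) \<le> x + sum_list (take l' xs)"
      using y(2) by (rule add_mono[rotated])
    then show ?thesis
      using y(1) l by (simp add: sum_mset.remove)
  qed
qed

lemma sum_mset_le_top_sum:
  assumes "N \<subseteq># M" and "size N \<le> l" and "\<forall>v\<in>#M. 0 \<le> v"
  shows "sum_mset N \<le> top_sum l M"
  unfolding top_sum_def
  by (rule sum_mset_le_sum_take_sorted) (use assms in \<open>simp_all add: sorted_wrt_sorted_desc\<close>)

lemma top_sum_nonneg:
  assumes "\<forall>v\<in>#M. 0 \<le> v"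
  shows "0 \<le> top_sum l M"
  using sum_mset_le_top_sum[of "{#}" M l] assms by simp

lemma sum_le_top_sum_image:
  assumes "finite C" and "A \<subseteq> C" and "card A \<le> l" and "\<forall>j\<in>C. 0 \<le> f j"
  shows "sum f A \<le> top_sum l (image_mset f (mset_set C))"
proof -
  have "sum f A = sum_mset (image_mset f (mset_set A))"
    by (simp add: sum_unfold_sum_mset)
  also have "\<dots> \<le> top_sum l (image_mset f (mset_set C))"
  proof (rule sum_mset_le_top_sum)
    show "image_mset f (mset_set A) \<subseteq># image_mset f (mset_set C)"
      using assms(1,2) by (intro image_mset_subseteq_mono subset_imp_msubset_mset_set) auto
  qed (use assms in auto)
  finally show ?thesis .
qed

lemma length_filter_greater_nth_le:
  fixes xs :: "'a::linorder list"
  assumes "sorted_wrt (\<ge>) xs"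
  shows "length (filter (\<lambda>v. xs ! n < v) xs) \<le> n"
proof (cases "n < length xs")
  case False
  then show ?thesis
    by (meson le_trans length_filter_le not_less)
next
  case True
  let ?P = "\<lambda>v. xs ! n < v"
  have "sorted_wrt (\<ge>) (xs ! n # drop (Suc n) xs)"
    using sorted_wrt_drop[OF assms, of n] True by (simp add: Cons_nth_drop_Suc)
  then have "filter ?P (xs ! n # drop (Suc n) xs) = []"
    by (auto simp: filter_empty_conv)
  then have "filter ?P xs = filter ?P (take n xs)"
    by (metis True Cons_nth_drop_Suc append_Nil2 append_take_drop_id filter_append)
  then show ?thesis
    by (metis length_filter_le length_take min.bounded_iff)
qed

lemma size_filter_greater_nth_sorted_desc:
  "size (filter_mset (\<lambda>v. sorted_desc M ! n < v) M) \<le> n"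
proof -
  let ?P = "\<lambda>v. sorted_desc M ! n < v"
  have "size (filter_mset ?P M) = length (filter ?P (sorted_desc M))"
    using mset_filter[of ?P "sorted_desc M"] by (metis mset_sorted_desc size_mset)
  also have "\<dots> \<le> n"
    using sorted_wrt_sorted_desc by (rule length_filter_greater_nth_le)
  finally show ?thesis .
qed

lemma card_conn_pairs_greater_nth:
  assumes "finite Cl" and "\<forall>j\<in>Cl. finite (S j)"
  shows "card {(j, i) \<in> SIGMA j:Cl. S j. sorted_desc (conn_costs d Cl S) ! n < d i j} \<le> n"
proof -
  let ?t = "sorted_desc (conn_costs d Cl S) ! n"
  have "{(j, i) \<in> SIGMA j:Cl. S j. ?t < d i j}
          = {p \<in> SIGMA j:Cl. S j. ?t < (\<lambda>(j, i). d i j) p}"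
    by auto
  moreover have "finite (SIGMA j:Cl. S j)"
    using assms by auto
  ultimately show ?thesis
    using size_filter_greater_nth_sorted_desc[where M = "conn_costs d Cl S" and n = n]
    by (simp add: conn_costs_def filter_mset_image_mset)
qed

lemma LT_le: "0 \<le> a \<Longrightarrow> LT T a \<le> a"
  by (simp add: LT_def)

lemma LT_scaled_eq_0:
  assumes "1 < c" and "0 \<le> a" and "a \<le> T"
  shows "LT (c * T) a = 0"
proof (cases "0 < T")
  case True
  have "1 * T < c * T"
    using assms(1) True by (rule mult_strict_right_mono)
  then have "a < c * T"
    using assms(3) by simp
  then show ?thesis
    by (simp add: LT_def)
qed (use assms in \<open>simp add: LT_def\<close>)

lemma threshold_cost_le_top_sum:
  fixes l :: nat
  assumes "finite Cl" and "\<forall>j\<in>Cl. finite (S j)"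
    and "\<forall>j\<in>Cl. \<forall>i\<in>S j. 0 \<le> d i j" and "1 < c"
  defines "T \<equiv> sorted_desc (conn_costs d Cl S) ! (l - 1)"
  shows "(\<Sum>j\<in>Cl. \<Sum>i\<in>S j. LT (c * T) (d i j))
           \<le> top_sum l (image_mset (\<lambda>j. \<Sum>i\<in>S j. d i j) (mset_set Cl))"
proof -
  define Q where "Q = {(j, i) \<in> SIGMA j:Cl. S j. T < d i j}"
  have "finite Q"
    unfolding Q_def using assms(1,2) by (auto intro: finite_subset[OF _ finite_SigmaI])
  moreover have "card Q \<le> l - 1"
    unfolding Q_def T_def using assms(1,2) by (rule card_conn_pairs_greater_nth)
  ultimately have card_far_clients: "card (fst ` Q) \<le> l"
    using card_image_le[of Q fst] by linarith
  have far_clients: "fst ` Q \<subseteq> Cl"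
    unfolding Q_def by auto
  have "(\<Sum>j\<in>Cl. \<Sum>i\<in>S j. LT (c * T) (d i j))
          = (\<Sum>j\<in>fst ` Q. \<Sum>i\<in>S j. LT (c * T) (d i j))"
  proof (rule sum.mono_neutral_right[OF assms(1) far_clients], intro ballI sum.neutral)
    fix j i
    assume "j \<in> Cl - fst ` Q" and "i \<in> S j"
    then have "d i j \<le> T" and "0 \<le> d i j"
      using assms(3) unfolding Q_def by (force simp: image_iff)+
    then show "LT (c * T) (d i j) = 0"
      using assms(4) by (simp add: LT_scaled_eq_0)
  qed
  also have "\<dots> \<le> (\<Sum>j\<in>fst ` Q. \<Sum>i\<in>S j. d i j)"
    using far_clients assms(3) by (intro sum_mono LT_le) blast
  also have "\<dots> \<le> top_sum l (image_mset (\<lambda>j. \<Sum>i\<in>S j. d i j) (mset_set Cl))"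
  proof (rule sum_le_top_sum_image[OF assms(1) far_clients card_far_clients])
    show "\<forall>j\<in>Cl. 0 \<le> (\<Sum>i\<in>S j. d i j)"
      using assms(3) by (simp add: sum_nonneg)
  qed
  finally show ?thesis .
qed

lemma assignment_LP_solution:
  fixes S :: "'a \<Rightarrow> 'a set" and c :: real and l :: nat
  assumes "finite Fac" and "finite Cl" and "F \<subseteq> Fac"
    and S_sub: "\<forall>j\<in>Cl. S j \<subseteq> F" and d_nonneg: "\<forall>j\<in>Cl. \<forall>i\<in>S j. 0 \<le> d i j"
    and "1 < c"
  defines "x \<equiv> \<lambda>i j. of_bool (i \<in> S j) :: real"
    and "y \<equiv> \<lambda>i. of_bool (i \<in> F) :: real"
    and "R \<equiv> top_sum l (image_mset (\<lambda>j. \<Sum>i\<in>S j. d i j) (mset_set Cl))"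
    and "T \<equiv> sorted_desc (conn_costs d Cl S) ! (l - 1)"
  shows "0 \<le> R"
    and "(\<Sum>j\<in>Cl. \<Sum>i\<in>Fac. x i j * LT (c * T) (d i j)) \<le> R"
    and "\<And>A. A \<subseteq> Cl \<Longrightarrow> card A \<le> l \<Longrightarrow> (\<Sum>j\<in>A. \<Sum>i\<in>Fac. x i j * d i j) \<le> R"
    and "\<And>j. j \<in> Cl \<Longrightarrow> (\<Sum>i\<in>Fac. x i j) = real (card (S j))"
    and "(\<Sum>i\<in>Fac. y i) = real (card F)"
    and "\<And>i j. j \<in> Cl \<Longrightarrow> 0 \<le> x i j \<and> x i j \<le> y i \<and> y i \<le> 1"
proof -
  have x_sum: "(\<Sum>i\<in>Fac. x i j * v i) = sum v (S j)" if "j \<in> Cl" for j v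
    using S_sub \<open>F \<subseteq> Fac\<close> that \<open>finite Fac\<close> by (auto simp: x_def Int_absorb1)
  have service_nonneg: "\<forall>j\<in>Cl. 0 \<le> (\<Sum>i\<in>S j. d i j)"
    using d_nonneg by (simp add: sum_nonneg)
  show "0 \<le> R"
    unfolding R_def using service_nonneg \<open>finite Cl\<close> by (simp add: top_sum_nonneg)
  have "(\<Sum>j\<in>Cl. \<Sum>i\<in>Fac. x i j * LT (c * T) (d i j))
          = (\<Sum>j\<in>Cl. \<Sum>i\<in>S j. LT (c * T) (d i j))"
    by (intro sum.cong refl x_sum)
  also have "\<dots> \<le> R"
    unfolding R_def T_def
  proof (rule threshold_cost_le_top_sum[OF \<open>finite Cl\<close> _ d_nonneg \<open>1 < c\<close>])
    show "\<forall>j\<in>Cl. finite (S j)"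
      using S_sub \<open>F \<subseteq> Fac\<close> \<open>finite Fac\<close> by (meson finite_subset)
  qed
  finally show "(\<Sum>j\<in>Cl. \<Sum>i\<in>Fac. x i j * LT (c * T) (d i j)) \<le> R" .
  show "(\<Sum>j\<in>A. \<Sum>i\<in>Fac. x i j * d i j) \<le> R" if "A \<subseteq> Cl" and "card A \<le> l" for A
  proof -
    have "(\<Sum>j\<in>A. \<Sum>i\<in>Fac. x i j * d i j) = (\<Sum>j\<in>A. \<Sum>i\<in>S j. d i j)"
      using that by (intro sum.cong refl x_sum) auto
    also have "\<dots> \<le> R"
      unfolding R_def using \<open>finite Cl\<close> that service_nonneg by (rule sum_le_top_sum_image)
    finally show ?thesis .
  qed
  show "(\<Sum>i\<in>Fac. x i j) = real (card (S j))" if "j \<in> Cl" for j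
    using x_sum[OF that, where v = "\<lambda>_. 1"] by simp
  show "(\<Sum>i\<in>Fac. y i) = real (card F)"
    using \<open>finite Fac\<close> \<open>F \<subseteq> Fac\<close> by (simp add: y_def Int_absorb1)
  show "0 \<le> x i j \<and> x i j \<le> y i \<and> y i \<le> 1" if "j \<in> Cl" for i j
    using S_sub that by (auto simp: x_def y_def)
qed

theorem lemma4:
  fixes Fac Cl :: "'a set" and d :: "'a \<Rightarrow> 'a \<Rightarrow> real" and k l :: nat
    and r :: "'a \<Rightarrow> nat" and F0 :: "'a set" and S :: "'a \<Rightarrow> 'a set"
  assumes "finite Fac" and "finite Cl"
    and "is_metric_on (Fac \<union> Cl) d"
    and "k \<ge> 1" and "k \<le> card Fac"
    and "\<forall>j\<in>Cl. r j \<ge> 1"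
    and "1 \<le> l" and "l \<le> card Cl"
    and opt_feas: "feasible_sol Fac Cl k r F0"
    and opt: "\<forall>F'. feasible_sol Fac Cl k r F' \<longrightarrow> topl_cost d Cl r l F0 \<le> topl_cost d Cl r l F'"
    and assign: "\<forall>j\<in>Cl. S j \<subseteq> F0 \<and> card (S j) = r j \<and> (\<Sum>i\<in>S j. d i j) = serv_cost d (r j) j F0"
  shows "\<exists>(x :: 'a \<Rightarrow> 'a \<Rightarrow> real) (y :: 'a \<Rightarrow> real) (R :: real).
           (let OPT = topl_cost d Cl r l F0;
                T = sorted_desc (conn_costs d Cl S) ! (l - 1) in
             R \<ge> 0 \<and>
             (\<Sum>j\<in>Cl. \<Sum>i\<in>Fac. x i j * LT (1.001 * T) (d i j)) \<le> R \<and>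
             (\<forall>A. A \<subseteq> Cl \<and> card A = l \<longrightarrow> (\<Sum>j\<in>A. \<Sum>i\<in>Fac. x i j * d i j) \<le> R) \<and>
             (\<forall>j\<in>Cl. (\<Sum>i\<in>Fac. x i j) = real (r j)) \<and>
             (\<Sum>i\<in>Fac. y i) = real k \<and>
             (\<forall>i\<in>Fac. \<forall>j\<in>Cl. 0 \<le> x i j \<and> x i j \<le> y i \<and> y i \<le> 1) \<and>
             R \<le> OPT)"
proof -
  obtain F1 where F1: "F0 \<subseteq> F1" "F1 \<subseteq> Fac" "card F1 = k"
    using opt_feas \<open>k \<le> card Fac\<close> \<open>finite Fac\<close>
    by (auto simp: feasible_sol_def dest: exists_subset_between)
  have S_sub: "\<forall>j\<in>Cl. S j \<subseteq> F1"
    using assign F1 by blast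
  have d_nonneg: "\<forall>j\<in>Cl. \<forall>i\<in>S j. 0 \<le> d i j"
    using \<open>is_metric_on (Fac \<union> Cl) d\<close> S_sub F1(2) unfolding is_metric_on_def by blast
  let ?R = "top_sum l (image_mset (\<lambda>j. \<Sum>i\<in>S j. d i j) (mset_set Cl))"
  have OPT: "topl_cost d Cl r l F0 = ?R"
    unfolding topl_cost_def using assign \<open>finite Cl\<close>
    by (intro arg_cong[where f = "top_sum l"] image_mset_cong) simp
  have "(1::real) < 1.001"
    by simp
  note LP = assignment_LP_solution[OF \<open>finite Fac\<close> \<open>finite Cl\<close> F1(2) S_sub d_nonneg this]
  show ?thesis
    unfolding Let_def OPT
    using LP(1,2,4-6) LP(3)[OF _ eq_imp_le] assign F1
    by (intro exI[of _ "\<lambda>i j. of_bool (i \<in> S j)"] exI[of _ "\<lambda>i. of_bool (i \<in> F1)"]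
        exI[of _ ?R] conjI)
      (auto intro: order.refl)
qed

end
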